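(* Let $k\ge2$, let $c>0$ and $\lambda\ne0$ be real, let $0<\delta\le 1$, let $N$ be sufficiently large in terms of $k,c,\lambda$, and write $P=N^{1/k}$. Suppose that $M\le|\lambda|(k-1)(cP)^{k-1}$. Let $\mathcal Z\subseteq[N,N+M]$ be measurable of measure $Z$ and $\eta:\mathcal Z\to\mathbb C$ measurable with $|\eta_\mu|=1$ for all $\mu\in\mathcal Z$. Then $$\int_{-\infty}^{\infty}|f^{(c)}(\lambda\alpha)H_{\eta,\mathcal Z}(\alpha)|^2K_1(\alpha)\,d\alpha\le 2PZ.$$
   Context: $e(z)=e^{2\pi iz}$; $f^{(c)}(\alpha)=\sum_{cP<x\le P,\ x\in\mathbb Z}e(\alpha x^k)$; $K_1(\alpha)=\big(\sin(\pi\delta\alpha)/(\pi\delta\alpha)\big)^2$; $H_{\eta,\mathcal Z}(\alpha)=\int_{\mathcal Z}\eta_\mu e(-\alpha\mu)\,d\mu$. *)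

theory Defs
  imports "HOL-Analysis.Analysis"
begin

definition e :: "real \<Rightarrow> complex" where
  "e z = exp (2 * of_real pi * \<i> * of_real z)"

definition fc :: "nat \<Rightarrow> real \<Rightarrow> real \<Rightarrow> real \<Rightarrow> complex" where
  "fc k c P \<alpha> = (\<Sum>x\<in>{x::int. c * P < of_int x \<and> of_int x \<le> P}. e (\<alpha> * of_int x ^ k))"

definition K1 :: "real \<Rightarrow> real \<Rightarrow> real" where
  "K1 \<delta> \<alpha> = (if \<alpha> = 0 then 1 else (sin (pi * \<delta> * \<alpha>) / (pi * \<delta> * \<alpha>))\<^sup>2)"

definition H :: "(real \<Rightarrow> complex) \<Rightarrow> real set \<Rightarrow> real \<Rightarrow> complex" where
  "H \<eta> Z \<alpha> = (LINT \<mu>:Z|lebesgue. \<eta> \<mu> * e (- \<alpha> * \<mu>))"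

end

theory Submission
  imports Defs "HOL-Probability.Probability"
begin

(* Put P = N^(1/k), a_x = lam * x^k, and v = indicator Z * eta.  Then
   f^(c)(lam alpha) * H(alpha) is the Fourier transform of w(t) = sum_x v(a_x + t), a sum of
   translates of v.  For cP < x < y <= P the gap a_y - a_x exceeds k |lam| (cP)^(k-1) > M, so
   the translated copies of Z are pairwise disjoint: hence |w| <= 1 and
   integral |w| <= #{x} * Z <= P Z.  Since 0 <= K_1 <= 1, the claim follows from the
   inequality  integral |w^|^2 <= integral |w|  for integrable w with |w| <= 1, which is
   Plancherel combined with |w|^2 <= |w|. *)

section \<open>The additive character e\<close>

lemma e_iexp: "e z = iexp (2 * pi * z)"
  unfolding e_def by (simp add: mult_ac)

lemma e_measurable [measurable]: "e \<in> borel_measurable borel"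
  unfolding e_def by (intro borel_measurable_continuous_onI continuous_intros)

lemma e_measurable_comp [measurable (raw)]:
  "f \<in> borel_measurable M \<Longrightarrow> (\<lambda>x. e (f x)) \<in> borel_measurable M"
  by (rule measurable_compose[OF _ e_measurable])

lemma cnj_measurable_comp [measurable (raw)]:
  "f \<in> borel_measurable M \<Longrightarrow> (\<lambda>x. cnj (f x :: complex)) \<in> borel_measurable M"
  by (rule measurable_compose[OF _ borel_measurable_continuous_onI[OF continuous_on_cnj[OF continuous_on_id]]])

lemma norm_e [simp]: "cmod (e x) = 1"
  unfolding e_iexp by (simp del: of_real_mult)

lemma cnj_e [simp]: "cnj (e x) = e (- x)"
  unfolding e_def by (simp add: exp_cnj)

lemma e_add: "e x * e y = e (x + y)"
  unfolding e_def by (simp add: exp_add[symmetric] algebra_simps)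

section \<open>Fourier transform and the Gaussian weight\<close>

definition fourier :: "(real \<Rightarrow> complex) \<Rightarrow> real \<Rightarrow> complex" where
  "fourier w \<alpha> = (\<integral>t. w t * e (-\<alpha>*t) \<partial>lborel)"

text \<open>The Gaussian weight of width r, used to regularise the Parseval identity.\<close>
definition gauss :: "real \<Rightarrow> real \<Rightarrow> real" where
  "gauss r \<alpha> = exp (-(\<alpha>/r)\<^sup>2/2)"

lemma gauss_nonneg: "0 \<le> gauss r \<alpha>"
  by (simp add: gauss_def)

lemma gauss_measurable [measurable]: "gauss r \<in> borel_measurable borel"
  unfolding gauss_def by measurable

lemma gauss_integrable:
  assumes "r > 0" shows "integrable lborel (gauss r)"
proof -
  have "gauss r = (\<lambda>\<alpha>. (r * sqrt (2*pi)) * normal_density 0 r \<alpha>)"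
    using assms by (auto simp: gauss_def normal_density_def fun_eq_iff real_sqrt_mult power_divide)
  then show ?thesis using assms by simp
qed

text \<open>The Fourier transform of a Gaussian is again a Gaussian (of width 1/(2 pi r)); this is the
  characteristic function of the standard normal distribution after rescaling.\<close>
lemma gauss_fourier:
  fixes r u :: real assumes r: "r > 0"
  shows "(\<integral>\<alpha>. complex_of_real (gauss r \<alpha>) * e (-\<alpha>*u) \<partial>lborel)
       = complex_of_real (normal_density 0 (1/(2*pi * r)) u)"
proof -
  define t where "t = -2*pi * r*u"
  have char: "(\<integral>x. std_normal_density x *\<^sub>R iexp (t*x) \<partial>lborel) = complex_of_real (exp (-(t^2)/2))"
  proof -
    have "char std_normal_distribution t = complex_of_real (exp (-(t^2)/2))"
      by (simp add: char_std_normal_distribution)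
    then show ?thesis unfolding char_def
      by (subst (asm) integral_density) auto
  qed
  have "(\<integral>\<alpha>. complex_of_real (gauss r \<alpha>) * e (-\<alpha>*u) \<partial>lborel)
      = \<bar>r\<bar> *\<^sub>R (\<integral>x. complex_of_real (gauss r (0 + r*x)) * e (-(0+r*x)*u) \<partial>lborel)"
    by (rule lborel_integral_real_affine) (use r in auto)
  also have "(\<lambda>x. complex_of_real (gauss r (0 + r*x)) * e (-(0+r*x)*u))
     = (\<lambda>x. complex_of_real (sqrt (2*pi)) * (std_normal_density x *\<^sub>R iexp (t*x)))"
    using r by (auto simp: gauss_def std_normal_density_def e_iexp t_def scaleR_conv_of_real mult_ac)
  also have "(\<integral>x. complex_of_real (sqrt (2*pi)) * (std_normal_density x *\<^sub>R iexp (t*x)) \<partial>lborel)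
      = complex_of_real (sqrt (2*pi)) * complex_of_real (exp (-(t^2)/2))"
    by (subst integral_mult_right_zero) (use char in simp)
  finally have lhs: "(\<integral>\<alpha>. complex_of_real (gauss r \<alpha>) * e (-\<alpha>*u) \<partial>lborel)
      = complex_of_real (r * sqrt (2*pi) * exp (-(t^2)/2))"
    using r by (simp add: scaleR_conv_of_real)
  have sqrt_eq: "sqrt (2 * pi * (1 / (2 * pi * r))\<^sup>2) = 1/(r * sqrt (2*pi))"
    using r by (simp add: real_sqrt_divide real_sqrt_mult power_divide power_mult_distrib)
        (simp add: field_simps real_sqrt_mult)
  have "normal_density 0 (1/(2*pi * r)) u = r * sqrt (2*pi) * exp (-(t^2)/2)"
    using r by (simp add: normal_density_def sqrt_eq) (simp add: t_def power_divide power_mult_distrib)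
  with lhs show ?thesis by simp
qed

lemma fourier_measurable:
  assumes [measurable]: "w \<in> borel_measurable lborel"
  shows "fourier w \<in> borel_measurable lborel"
  unfolding fourier_def by measurable

lemma norm_fourier_le: "cmod (fourier w \<alpha>) \<le> (\<integral>t. cmod (w t) \<partial>lborel)"
  unfolding fourier_def by (rule order.trans[OF integral_norm_bound]) (simp add: norm_mult)

lemma integrable_product_bound:
  fixes f :: "real \<Rightarrow> real \<Rightarrow> complex"
  assumes fm[measurable]: "case_prod f \<in> borel_measurable (lborel \<Otimes>\<^sub>M lborel)"
    and ai: "integrable lborel a" and bi: "integrable lborel b"
    and a0: "\<And>x. 0 \<le> a x" and b0: "\<And>y. 0 \<le> b y"
    and fb: "\<And>x y. cmod (f x y) \<le> a x * b y"
  shows "integrable (lborel \<Otimes>\<^sub>M lborel) (case_prod f)"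
proof (rule lborel_pair.Fubini_integrable)
  show "case_prod f \<in> borel_measurable (lborel \<Otimes>\<^sub>M lborel)" by fact
  have am[measurable]: "a \<in> borel_measurable lborel" using ai by (rule borel_measurable_integrable)
  have section_integrable: "integrable lborel (\<lambda>y. f x y)" for x
  proof -
    have "integrable lborel (\<lambda>y. a x * b y)" using bi by simp
    then show ?thesis
      by (rule Bochner_Integration.integrable_bound)
         (use fb a0 b0 in \<open>auto intro!: AE_I2 order.trans[OF fb] simp: abs_mult\<close>)
  qed
  then show "AE x in lborel. integrable lborel (\<lambda>y. case_prod f (x, y))" by simp
  show "integrable lborel (\<lambda>x. \<integral>y. norm (case_prod f (x, y)) \<partial>lborel)"
  proof (rule Bochner_Integration.integrable_bound[where f="\<lambda>x. a x * (\<integral>y. b y \<partial>lborel)"])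
    show "integrable lborel (\<lambda>x. a x * (\<integral>y. b y \<partial>lborel))" using ai by simp
    show "(\<lambda>x. \<integral>y. norm (case_prod f (x, y)) \<partial>lborel) \<in> borel_measurable lborel"
      by measurable
    show "AE x in lborel. norm (\<integral>y. norm (case_prod f (x, y)) \<partial>lborel) \<le> norm (a x * (\<integral>y. b y \<partial>lborel))"
    proof (intro AE_I2)
      fix x
      have "(\<integral>y. norm (f x y) \<partial>lborel) \<le> (\<integral>y. a x * b y \<partial>lborel)"
        using section_integrable bi fb by (intro integral_mono) auto
      moreover have "0 \<le> (\<integral>y. norm (f x y) \<partial>lborel)" by simp
      moreover have "0 \<le> (\<integral>y. b y \<partial>lborel)" using b0 by simp
      ultimately show "norm (\<integral>y. norm (case_prod f (x, y)) \<partial>lborel) \<le> norm (a x * (\<integral>y. b y \<partial>lborel))"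
        using a0[of x] by (simp add: abs_mult)
    qed
  qed
qed

section \<open>Parseval against a Gaussian weight\<close>

lemma gauss_smoothing_identity:
  fixes w :: "real \<Rightarrow> complex"
  assumes r: "r > 0" and wm[measurable]: "w \<in> borel_measurable lborel" and wi: "integrable lborel w"
  shows "(\<integral>\<alpha>. complex_of_real (gauss r \<alpha>) * e (-\<alpha>*t) * cnj (fourier w \<alpha>) \<partial>lborel)
       = (\<integral>s. cnj (w s) * complex_of_real (normal_density 0 (1/(2*pi*r)) (t - s)) \<partial>lborel)"
proof -
  define f where "f \<alpha> s = complex_of_real (gauss r \<alpha>) * cnj (w s) * e (-\<alpha>*(t - s))" for \<alpha> s
  have fm[measurable]: "case_prod f \<in> borel_measurable (lborel \<Otimes>\<^sub>M lborel)"
    unfolding f_def by measurable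
  have wn: "integrable lborel (\<lambda>s. cmod (w s))" using wi by simp
  have fi: "integrable (lborel \<Otimes>\<^sub>M lborel) (case_prod f)"
    by (rule integrable_product_bound[OF fm gauss_integrable[OF r] wn])
      (auto simp: f_def norm_mult gauss_nonneg)
  have inner: "complex_of_real (gauss r \<alpha>) * e (-\<alpha>*t) * cnj (fourier w \<alpha>) = (\<integral>s. f \<alpha> s \<partial>lborel)" for \<alpha>
  proof -
    have "cnj (fourier w \<alpha>) = (\<integral>s. cnj (w s) * e (\<alpha> * s) \<partial>lborel)"
      unfolding fourier_def by (subst Bochner_Integration.integral_cnj[symmetric]) simp
    then have "complex_of_real (gauss r \<alpha>) * e (-\<alpha>*t) * cnj (fourier w \<alpha>)
       = (\<integral>s. complex_of_real (gauss r \<alpha>) * e (-\<alpha>*t) * (cnj (w s) * e (\<alpha> * s)) \<partial>lborel)"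
      by (simp add: integral_mult_right_zero)
    also have "\<dots> = (\<integral>s. f \<alpha> s \<partial>lborel)"
      by (rule Bochner_Integration.integral_cong) (auto simp: f_def e_add algebra_simps)
    finally show ?thesis .
  qed
  have outer: "(\<integral>\<alpha>. f \<alpha> s \<partial>lborel) = cnj (w s) * complex_of_real (normal_density 0 (1/(2*pi*r)) (t - s))" for s
  proof -
    have "(\<integral>\<alpha>. f \<alpha> s \<partial>lborel) = cnj (w s) * (\<integral>\<alpha>. complex_of_real (gauss r \<alpha>) * e (-\<alpha>*(t - s)) \<partial>lborel)"
      unfolding f_def by (subst integral_mult_right_zero[symmetric]) (simp add: mult_ac)
    then show ?thesis using gauss_fourier[OF r, of "t - s"] by simp
  qed
  have "(\<integral>\<alpha>. complex_of_real (gauss r \<alpha>) * e (-\<alpha>*t) * cnj (fourier w \<alpha>) \<partial>lborel)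
      = (\<integral>\<alpha>. (\<integral>s. f \<alpha> s \<partial>lborel) \<partial>lborel)"
    by (intro Bochner_Integration.integral_cong refl inner)
  also have "\<dots> = (\<integral>s. (\<integral>\<alpha>. f \<alpha> s \<partial>lborel) \<partial>lborel)"
    using lborel_pair.Fubini_integral[OF fi] by simp
  finally show ?thesis by (simp add: outer)
qed

text \<open>Smoothing a function bounded by 1 with a probability density keeps it bounded by 1.\<close>
lemma norm_gauss_smoothing_le_one:
  fixes w :: "real \<Rightarrow> complex"
  assumes \<sigma>: "\<sigma> > 0" and wm[measurable]: "w \<in> borel_measurable lborel" and wb: "\<And>s. cmod (w s) \<le> 1"
  shows "cmod (\<integral>s. cnj (w s) * complex_of_real (normal_density 0 \<sigma> (t - s)) \<partial>lborel) \<le> 1"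
proof -
  have swap: "normal_density 0 \<sigma> (t - s) = normal_density t \<sigma> s" for s
    unfolding normal_density_def by (simp add: power2_commute)
  have bound: "norm (cnj (w s) * complex_of_real (normal_density 0 \<sigma> (t - s))) \<le> normal_density t \<sigma> s" for s
    by (auto simp: swap norm_mult intro!: mult_left_le_one_le wb)
  have "cmod (\<integral>s. cnj (w s) * complex_of_real (normal_density 0 \<sigma> (t - s)) \<partial>lborel)
      \<le> (\<integral>s. normal_density t \<sigma> s \<partial>lborel)"
  proof (rule Bochner_Integration.integral_norm_bound_integral)
    show "integrable lborel (normal_density t \<sigma>)" using \<sigma> by simp
    then show "integrable lborel (\<lambda>s. cnj (w s) * complex_of_real (normal_density 0 \<sigma> (t - s)))"
      by (rule Bochner_Integration.integrable_bound) (auto intro!: AE_I2 bound)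
  qed (rule bound)
  then show ?thesis using \<sigma> by simp
qed

lemma gauss_energy_identity:
  fixes w :: "real \<Rightarrow> complex"
  assumes r: "r > 0" and wm[measurable]: "w \<in> borel_measurable lborel" and wi: "integrable lborel w"
  shows "(\<integral>\<alpha>. complex_of_real (gauss r \<alpha>) * (fourier w \<alpha> * cnj (fourier w \<alpha>)) \<partial>lborel)
       = (\<integral>t. w t * (\<integral>\<alpha>. complex_of_real (gauss r \<alpha>) * e (-\<alpha>*t) * cnj (fourier w \<alpha>) \<partial>lborel) \<partial>lborel)"
proof -
  define L where "L = (\<integral>t. cmod (w t) \<partial>lborel)"
  define f where "f \<alpha> t = w t * (complex_of_real (gauss r \<alpha>) * e (-\<alpha>*t) * cnj (fourier w \<alpha>))" for \<alpha> t
  have Fm[measurable]: "fourier w \<in> borel_measurable lborel" by (rule fourier_measurable[OF wm])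
  have fm[measurable]: "case_prod f \<in> borel_measurable (lborel \<Otimes>\<^sub>M lborel)"
    unfolding f_def by measurable
  have fi: "integrable (lborel \<Otimes>\<^sub>M lborel) (case_prod f)"
  proof (rule integrable_product_bound[OF fm])
    show "integrable lborel (\<lambda>\<alpha>. gauss r \<alpha> * L)" using gauss_integrable[OF r] by simp
    show "integrable lborel (\<lambda>t. cmod (w t))" using wi by simp
    show "0 \<le> gauss r \<alpha> * L" for \<alpha> unfolding L_def by (simp add: gauss_nonneg)
    show "cmod (f \<alpha> t) \<le> gauss r \<alpha> * L * cmod (w t)" for \<alpha> t
    proof -
      have "gauss r \<alpha> * (cmod (fourier w \<alpha>) * cmod (w t)) \<le> gauss r \<alpha> * (L * cmod (w t))"
        unfolding L_def by (intro mult_left_mono mult_right_mono norm_fourier_le gauss_nonneg) auto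
      then show ?thesis by (simp add: f_def norm_mult mult_ac gauss_nonneg)
    qed
  qed simp
  have "complex_of_real (gauss r \<alpha>) * (fourier w \<alpha> * cnj (fourier w \<alpha>)) = (\<integral>t. f \<alpha> t \<partial>lborel)" for \<alpha>
  proof -
    have "(\<integral>t. f \<alpha> t \<partial>lborel)
        = (\<integral>t. complex_of_real (gauss r \<alpha>) * (w t * e (-\<alpha>*t)) * cnj (fourier w \<alpha>) \<partial>lborel)"
      by (rule Bochner_Integration.integral_cong) (auto simp: f_def mult_ac)
    also have "\<dots> = complex_of_real (gauss r \<alpha>) * fourier w \<alpha> * cnj (fourier w \<alpha>)"
      by (simp add: fourier_def integral_mult_right_zero integral_mult_left_zero)
    finally show ?thesis by (simp add: mult_ac)
  qed
  then have "(\<integral>\<alpha>. complex_of_real (gauss r \<alpha>) * (fourier w \<alpha> * cnj (fourier w \<alpha>)) \<partial>lborel)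
      = (\<integral>\<alpha>. (\<integral>t. f \<alpha> t \<partial>lborel) \<partial>lborel)"
    by simp
  also have "\<dots> = (\<integral>t. (\<integral>\<alpha>. f \<alpha> t \<partial>lborel) \<partial>lborel)"
    using lborel_pair.Fubini_integral[OF fi] by simp
  finally show ?thesis by (simp add: f_def integral_mult_right_zero)
qed

lemma gauss_weighted_energy_le_L1:
  fixes w :: "real \<Rightarrow> complex"
  assumes r: "r > 0" and wm[measurable]: "w \<in> borel_measurable lborel"
    and wi: "integrable lborel w" and wb: "\<And>t. cmod (w t) \<le> 1"
  shows "integrable lborel (\<lambda>\<alpha>. gauss r \<alpha> * (cmod (fourier w \<alpha>))\<^sup>2)"
    and "(\<integral>\<alpha>. gauss r \<alpha> * (cmod (fourier w \<alpha>))\<^sup>2 \<partial>lborel) \<le> (\<integral>t. cmod (w t) \<partial>lborel)"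
proof -
  define L where "L = (\<integral>t. cmod (w t) \<partial>lborel)"
  define J where "J t = (\<integral>\<alpha>. complex_of_real (gauss r \<alpha>) * e (-\<alpha>*t) * cnj (fourier w \<alpha>) \<partial>lborel)" for t
  have wn: "integrable lborel (\<lambda>t. cmod (w t))" using wi by simp
  have J_conv: "J = (\<lambda>t. \<integral>s. cnj (w s) * complex_of_real (normal_density 0 (1/(2*pi*r)) (t - s)) \<partial>lborel)"
    unfolding J_def by (intro ext gauss_smoothing_identity[OF r wm wi])
  have Jm[measurable]: "J \<in> borel_measurable lborel"
    unfolding J_conv by measurable
  have Jb: "cmod (J t) \<le> 1" for t
    unfolding J_conv using r by (intro norm_gauss_smoothing_le_one wm wb) simp
  show "integrable lborel (\<lambda>\<alpha>. gauss r \<alpha> * (cmod (fourier w \<alpha>))\<^sup>2)"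
  proof -
    have "integrable lborel (\<lambda>\<alpha>. gauss r \<alpha> * L\<^sup>2)" using gauss_integrable[OF r] by simp
    then show ?thesis
      by (rule Bochner_Integration.integrable_bound)
         (use fourier_measurable[OF wm] in \<open>auto intro!: AE_I2 mult_left_mono power_mono norm_fourier_le
            simp: abs_mult gauss_nonneg L_def\<close>)
  qed
  have wJi: "integrable lborel (\<lambda>t. w t * J t)"
    using wn by (rule Bochner_Integration.integrable_bound)
       (auto intro!: AE_I2 mult_left_le simp: norm_mult Jb)
  have "(\<integral>\<alpha>. gauss r \<alpha> * (cmod (fourier w \<alpha>))\<^sup>2 \<partial>lborel)
      = cmod (complex_of_real (\<integral>\<alpha>. gauss r \<alpha> * (cmod (fourier w \<alpha>))\<^sup>2 \<partial>lborel))"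
    by (simp add: gauss_nonneg)
  also have "complex_of_real (\<integral>\<alpha>. gauss r \<alpha> * (cmod (fourier w \<alpha>))\<^sup>2 \<partial>lborel) = (\<integral>t. w t * J t \<partial>lborel)"
    unfolding J_def gauss_energy_identity[OF r wm wi, symmetric] integral_complex_of_real[symmetric]
    by (simp flip: complex_norm_square)
  also have "cmod (\<integral>t. w t * J t \<partial>lborel) \<le> L"
    unfolding L_def using wJi wn
    by (rule Bochner_Integration.integral_norm_bound_integral) (auto simp: norm_mult intro!: mult_left_le Jb)
  finally show "(\<integral>\<alpha>. gauss r \<alpha> * (cmod (fourier w \<alpha>))\<^sup>2 \<partial>lborel) \<le> (\<integral>t. cmod (w t) \<partial>lborel)"
    unfolding L_def .
qed

text \<open>Letting the width of the Gaussian tend to infinity (Fatou's lemma):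
  for integrable w with |w| <= 1, the energy of its Fourier transform is at most its L1 norm.\<close>
lemma fourier_energy_le_L1:
  fixes w :: "real \<Rightarrow> complex"
  assumes wm[measurable]: "w \<in> borel_measurable lborel"
    and wi: "integrable lborel w" and wb: "\<And>t. cmod (w t) \<le> 1"
  shows "(\<integral>\<^sup>+\<alpha>. ennreal ((cmod (fourier w \<alpha>))\<^sup>2) \<partial>lborel) \<le> ennreal (\<integral>t. cmod (w t) \<partial>lborel)"
proof -
  define L where "L = (\<integral>t. cmod (w t) \<partial>lborel)"
  define u where "u n \<alpha> = ennreal (gauss (real (Suc n)) \<alpha> * (cmod (fourier w \<alpha>))\<^sup>2)" for n \<alpha>
  have Fm[measurable]: "fourier w \<in> borel_measurable lborel" by (rule fourier_measurable[OF wm])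
  have um[measurable]: "u n \<in> borel_measurable lborel" for n unfolding u_def by measurable
  have lim: "liminf (\<lambda>n. u n \<alpha>) = ennreal ((cmod (fourier w \<alpha>))\<^sup>2)" for \<alpha>
  proof (rule lim_imp_Liminf)
    have "(\<lambda>n. \<alpha> / real (Suc n)) \<longlonglongrightarrow> 0"
      using LIMSEQ_Suc[OF lim_const_over_n[of \<alpha>]] by simp
    then have "(\<lambda>n. gauss (real (Suc n)) \<alpha> * (cmod (fourier w \<alpha>))\<^sup>2) \<longlonglongrightarrow> exp (-(0)\<^sup>2/2) * (cmod (fourier w \<alpha>))\<^sup>2"
      unfolding gauss_def by (intro tendsto_intros) auto
    then show "(\<lambda>n. u n \<alpha>) \<longlonglongrightarrow> ennreal ((cmod (fourier w \<alpha>))\<^sup>2)"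
      unfolding u_def by (intro tendsto_ennrealI) simp
  qed simp
  have bound: "integral\<^sup>N lborel (u n) \<le> ennreal L" for n
  proof -
    have r: "real (Suc n) > 0" by simp
    have "integral\<^sup>N lborel (u n) = ennreal (\<integral>\<alpha>. gauss (real (Suc n)) \<alpha> * (cmod (fourier w \<alpha>))\<^sup>2 \<partial>lborel)"
      unfolding u_def
      by (rule nn_integral_eq_integral[OF gauss_weighted_energy_le_L1(1)[OF r wm wi wb]])
         (simp add: gauss_nonneg)
    also have "\<dots> \<le> ennreal L"
      unfolding L_def by (rule ennreal_leI, rule gauss_weighted_energy_le_L1(2)[OF r wm wi wb])
    finally show ?thesis .
  qed
  have "(\<integral>\<^sup>+\<alpha>. ennreal ((cmod (fourier w \<alpha>))\<^sup>2) \<partial>lborel) = (\<integral>\<^sup>+\<alpha>. liminf (\<lambda>n. u n \<alpha>) \<partial>lborel)"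
    by (simp add: lim)
  also have "\<dots> \<le> liminf (\<lambda>n. integral\<^sup>N lborel (u n))"
    by (rule nn_integral_liminf) simp
  also have "\<dots> \<le> ennreal L"
    by (rule Liminf_le) (auto simp: bound)
  finally show ?thesis unfolding L_def .
qed

text \<open>A Lebesgue measurable function bounded by 1 agrees almost everywhere with a Borel
  measurable function bounded by 1 (apply the real case to real and imaginary parts).\<close>
lemma bounded_borel_representative:
  fixes w0 :: "real \<Rightarrow> complex"
  assumes w0m[measurable]: "w0 \<in> borel_measurable lebesgue" and w0b: "\<And>t. cmod (w0 t) \<le> 1"
  obtains w where "w \<in> borel_measurable lborel" "\<And>t. cmod (w t) \<le> 1" "AE t in lebesgue. w0 t = w t"
proof -
  have "(\<lambda>t. Re (w0 t)) \<in> borel_measurable lebesgue" by measurable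
  then obtain g1 where g1[measurable]: "g1 \<in> borel_measurable lborel" and ae1: "AE t in lborel. Re (w0 t) = g1 t"
    using completion_ex_borel_measurable_real by blast
  have "(\<lambda>t. Im (w0 t)) \<in> borel_measurable lebesgue" by measurable
  then obtain g2 where g2[measurable]: "g2 \<in> borel_measurable lborel" and ae2: "AE t in lborel. Im (w0 t) = g2 t"
    using completion_ex_borel_measurable_real by blast
  define g where "g t = complex_of_real (g1 t) + \<i> * complex_of_real (g2 t)" for t
  define w where "w t = (if cmod (g t) \<le> 1 then g t else 0)" for t
  have "w \<in> borel_measurable lborel" unfolding w_def g_def by measurable
  moreover have "cmod (w t) \<le> 1" for t by (simp add: w_def)
  moreover have "AE t in lborel. w0 t = w t"
    using ae1 ae2
  proof eventually_elim
    case (elim t)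
    then have "w0 t = g t" by (simp add: g_def complex_eq_iff)
    then show ?case using w0b[of t] by (simp add: w_def)
  qed
  then have "AE t in lebesgue. w0 t = w t" by (rule AE_completion)
  ultimately show ?thesis by (rule that)
qed

lemma fourier_energy_le_L1_lebesgue:
  fixes w0 :: "real \<Rightarrow> complex"
  assumes w0m[measurable]: "w0 \<in> borel_measurable lebesgue"
    and w0i: "integrable lebesgue w0" and w0b: "\<And>t. cmod (w0 t) \<le> 1"
  shows "(\<integral>\<^sup>+\<alpha>. ennreal ((cmod (\<integral>t. w0 t * e (-\<alpha>*t) \<partial>lebesgue))\<^sup>2) \<partial>lborel)
           \<le> ennreal (\<integral>t. cmod (w0 t) \<partial>lebesgue)"
proof -
  obtain w where wm[measurable]: "w \<in> borel_measurable lborel" and wb: "\<And>t. cmod (w t) \<le> 1"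
    and ae: "AE t in lebesgue. w0 t = w t"
    using bounded_borel_representative[OF w0m w0b] by blast
  have wi: "integrable lborel w"
  proof -
    have "integrable lebesgue w" using w0i measurable_completion[OF wm] ae by (rule integrable_cong_AE_imp)
    then show ?thesis using integrable_completion[OF wm] by simp
  qed
  have transform_eq: "(\<integral>t. w0 t * e (-\<alpha>*t) \<partial>lebesgue) = fourier w \<alpha>" for \<alpha>
  proof -
    have m[measurable]: "(\<lambda>t. w t * e (-\<alpha>*t)) \<in> borel_measurable lborel" by measurable
    have em: "(\<lambda>t. e (-\<alpha>*t)) \<in> borel_measurable lebesgue"
      by (rule measurable_completion) measurable
    have "(\<integral>t. w0 t * e (-\<alpha>*t) \<partial>lebesgue) = (\<integral>t. w t * e (-\<alpha>*t) \<partial>lebesgue)"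
      using ae by (intro integral_cong_AE measurable_completion[OF m] borel_measurable_times w0m em)
        (auto elim!: eventually_mono)
    also have "\<dots> = fourier w \<alpha>"
      unfolding fourier_def by (rule integral_completion[OF m])
    finally show ?thesis .
  qed
  have norm_eq: "(\<integral>t. cmod (w0 t) \<partial>lebesgue) = (\<integral>t. cmod (w t) \<partial>lborel)"
  proof -
    have m: "(\<lambda>t. cmod (w t)) \<in> borel_measurable lborel" by measurable
    have "(\<integral>t. cmod (w0 t) \<partial>lebesgue) = (\<integral>t. cmod (w t) \<partial>lebesgue)"
      using ae by (intro integral_cong_AE measurable_completion[OF m]) (auto elim!: eventually_mono)
    also have "\<dots> = (\<integral>t. cmod (w t) \<partial>lborel)"
      by (rule integral_completion[OF m])
    finally show ?thesis .
  qed
  show ?thesis unfolding transform_eq norm_eq by (rule fourier_energy_le_L1[OF wm wi wb])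
qed

section \<open>Sums of translates\<close>

lemma lebesgue_translate:
  fixes v :: "real \<Rightarrow> 'b::euclidean_space"
  assumes vm: "v \<in> borel_measurable lebesgue" and vi: "integrable lebesgue v"
  shows "(\<lambda>t. v (a + t)) \<in> borel_measurable lebesgue"
    and "integrable lebesgue (\<lambda>t. v (a + t))"
    and "(\<integral>t. v (a + t) \<partial>lebesgue) = (\<integral>t. v t \<partial>lebesgue)"
  using borel_measurable_affine[OF vm, of 1 a] lebesgue_integrable_real_affine[OF vi, of 1 a]
    lebesgue_integral_real_affine[of 1 v a] by auto

lemma exp_sum_times_fourier:
  fixes a :: "'i \<Rightarrow> real" and v :: "real \<Rightarrow> complex"
  assumes vm: "v \<in> borel_measurable lebesgue" and vi: "integrable lebesgue v"
  shows "(\<Sum>x\<in>X. e (\<alpha> * a x)) * (\<integral>\<mu>. v \<mu> * e (-\<alpha>*\<mu>) \<partial>lebesgue)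
       = (\<integral>t. (\<Sum>x\<in>X. v (a x + t)) * e (-\<alpha>*t) \<partial>lebesgue)"
proof -
  have shift: "e (\<alpha> * a x) * (\<integral>\<mu>. v \<mu> * e (-\<alpha>*\<mu>) \<partial>lebesgue) = (\<integral>t. v (a x + t) * e (-\<alpha>*t) \<partial>lebesgue)"
    and shift_integrable: "integrable lebesgue (\<lambda>t. v (a x + t) * e (-\<alpha>*t))" for x
  proof -
    define g where "g \<mu> = v \<mu> * e ((-\<alpha>) * \<mu> + \<alpha> * a x)" for \<mu>
    have em: "(\<lambda>\<mu>. e ((-\<alpha>) * \<mu> + \<alpha> * a x)) \<in> borel_measurable lebesgue"
      by (rule measurable_completion) measurable
    have gm: "g \<in> borel_measurable lebesgue" unfolding g_def by (intro borel_measurable_times vm em)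
    have gi: "integrable lebesgue g"
      using vi gm by (rule Bochner_Integration.integrable_bound) (auto simp: g_def norm_mult)
    have g_shift: "g (a x + t) = v (a x + t) * e (-\<alpha>*t)" for t
      by (simp add: g_def algebra_simps)
    show "integrable lebesgue (\<lambda>t. v (a x + t) * e (-\<alpha>*t))"
      using lebesgue_translate(2)[OF gm gi, of "a x"] by (simp add: g_shift)
    have "e (\<alpha> * a x) * (\<integral>\<mu>. v \<mu> * e (-\<alpha>*\<mu>) \<partial>lebesgue) = (\<integral>\<mu>. g \<mu> \<partial>lebesgue)"
      by (simp add: g_def e_add mult_ac flip: integral_mult_right_zero)
    also have "\<dots> = (\<integral>t. g (a x + t) \<partial>lebesgue)"
      by (simp add: lebesgue_translate(3)[OF gm gi])
    finally show "e (\<alpha> * a x) * (\<integral>\<mu>. v \<mu> * e (-\<alpha>*\<mu>) \<partial>lebesgue) = (\<integral>t. v (a x + t) * e (-\<alpha>*t) \<partial>lebesgue)"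
      by (simp add: g_shift)
  qed
  have "(\<Sum>x\<in>X. e (\<alpha> * a x)) * (\<integral>\<mu>. v \<mu> * e (-\<alpha>*\<mu>) \<partial>lebesgue)
      = (\<Sum>x\<in>X. (\<integral>t. v (a x + t) * e (-\<alpha>*t) \<partial>lebesgue))"
    unfolding sum_distrib_right by (intro sum.cong refl shift)
  also have "\<dots> = (\<integral>t. (\<Sum>x\<in>X. v (a x + t) * e (-\<alpha>*t)) \<partial>lebesgue)"
    by (rule Bochner_Integration.integral_sum[symmetric]) (rule shift_integrable)
  finally show ?thesis by (simp add: sum_distrib_right)
qed

lemma separated_translates_cover_once:
  fixes a :: "'i \<Rightarrow> real"
  assumes X: "finite X" and ZNM: "Z \<subseteq> {N..N + M}"
    and sep: "\<And>x y. x \<in> X \<Longrightarrow> y \<in> X \<Longrightarrow> x \<noteq> y \<Longrightarrow> M < \<bar>a x - a y\<bar>"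
  shows "(\<Sum>x\<in>X. indicator Z (a x + t) :: real) \<le> 1"
proof -
  have hit_once: "x = y" if "x \<in> X" "y \<in> X" "a x + t \<in> Z" "a y + t \<in> Z" for x y
  proof (rule ccontr)
    assume "x \<noteq> y"
    then have "M < \<bar>a x - a y\<bar>" using sep that by blast
    moreover have "\<bar>a x - a y\<bar> \<le> M"
      using subsetD[OF ZNM that(3)] subsetD[OF ZNM that(4)] by auto
    ultimately show False by simp
  qed
  have "(\<Sum>x\<in>X. indicator Z (a x + t) :: real) = real (card (X \<inter> {x. a x + t \<in> Z}))"
    using X by (simp add: indicator_def sum.If_cases Int_def)
  also have "card (X \<inter> {x. a x + t \<in> Z}) \<le> Suc 0"
    using X hit_once by (subst card_le_Suc0_iff_eq) auto
  finally show ?thesis by simp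
qed

lemma integrable_indicator_in_interval:
  assumes Zs: "Z \<in> sets lebesgue" and ZNM: "Z \<subseteq> {N..N + M}"
  shows "integrable lebesgue (indicator Z :: real \<Rightarrow> real)"
proof -
  have "emeasure lebesgue Z \<le> emeasure lebesgue {N..N + M}"
    using ZNM by (intro emeasure_mono) auto
  also have "\<dots> < \<infinity>" by (simp add: emeasure_lborel_Icc_eq)
  finally show ?thesis using Zs by simp
qed

lemma separated_translates_sum:
  fixes a :: "'i \<Rightarrow> real" and v :: "real \<Rightarrow> complex"
  assumes X: "finite X" and Zs: "Z \<in> sets lebesgue" and ZNM: "Z \<subseteq> {N..N + M}"
    and sep: "\<And>x y. x \<in> X \<Longrightarrow> y \<in> X \<Longrightarrow> x \<noteq> y \<Longrightarrow> M < \<bar>a x - a y\<bar>"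
    and vm: "v \<in> borel_measurable lebesgue" and v_le: "\<And>\<mu>. cmod (v \<mu>) \<le> indicator Z \<mu>"
  shows "integrable lebesgue v"
    and "(\<lambda>t. \<Sum>x\<in>X. v (a x + t)) \<in> borel_measurable lebesgue"
    and "integrable lebesgue (\<lambda>t. \<Sum>x\<in>X. v (a x + t))"
    and "cmod (\<Sum>x\<in>X. v (a x + t)) \<le> 1"
    and "(\<integral>t. cmod (\<Sum>x\<in>X. v (a x + t)) \<partial>lebesgue) \<le> real (card X) * measure lebesgue Z"
proof -
  have Zm: "(indicator Z :: real \<Rightarrow> real) \<in> borel_measurable lebesgue" using Zs by simp
  have Zi: "integrable lebesgue (indicator Z :: real \<Rightarrow> real)"
    by (rule integrable_indicator_in_interval[OF Zs ZNM])
  show vi: "integrable lebesgue v"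
    using Zi by (rule Bochner_Integration.integrable_bound) (use vm v_le in \<open>auto intro!: AE_I2\<close>)
  show "(\<lambda>t. \<Sum>x\<in>X. v (a x + t)) \<in> borel_measurable lebesgue"
    by (intro borel_measurable_sum lebesgue_translate(1)[OF vm vi])
  show wi: "integrable lebesgue (\<lambda>t. \<Sum>x\<in>X. v (a x + t))"
    by (intro Bochner_Integration.integrable_sum lebesgue_translate(2)[OF vm vi])
  have le_count: "cmod (\<Sum>x\<in>X. v (a x + t)) \<le> (\<Sum>x\<in>X. indicator Z (a x + t))" for t
    by (intro order.trans[OF norm_sum sum_mono] v_le)
  have "(\<Sum>x\<in>X. indicator Z (a x + t) :: real) \<le> 1"
    using X ZNM sep by (rule separated_translates_cover_once)
  then show "cmod (\<Sum>x\<in>X. v (a x + t)) \<le> 1" using le_count[of t] by linarith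
  have "(\<integral>t. cmod (\<Sum>x\<in>X. v (a x + t)) \<partial>lebesgue) \<le> (\<integral>t. (\<Sum>x\<in>X. indicator Z (a x + t)) \<partial>lebesgue)"
    using wi by (intro Bochner_Integration.integral_mono Bochner_Integration.integrable_sum
        lebesgue_translate(2)[OF Zm Zi] le_count) auto
  also have "\<dots> = (\<Sum>x\<in>X. measure lebesgue Z)"
    by (simp add: Bochner_Integration.integral_sum lebesgue_translate(2,3)[OF Zm Zi])
  finally show "(\<integral>t. cmod (\<Sum>x\<in>X. v (a x + t)) \<partial>lebesgue) \<le> real (card X) * measure lebesgue Z"
    by simp
qed

lemma separated_exp_sum_energy_bound:
  fixes a :: "'i \<Rightarrow> real" and \<eta> :: "real \<Rightarrow> complex"
  assumes X: "finite X" and Zs: "Z \<in> sets lebesgue" and ZNM: "Z \<subseteq> {N..N + M}"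
    and sep: "\<And>x y. x \<in> X \<Longrightarrow> y \<in> X \<Longrightarrow> x \<noteq> y \<Longrightarrow> M < \<bar>a x - a y\<bar>"
    and \<eta>m: "set_borel_measurable lebesgue Z \<eta>" and \<eta>b: "\<forall>\<mu>\<in>Z. cmod (\<eta> \<mu>) \<le> 1"
  shows "(\<integral>\<^sup>+\<alpha>. ennreal ((cmod ((\<Sum>x\<in>X. e (\<alpha> * a x)) * H \<eta> Z \<alpha>))\<^sup>2) \<partial>lborel)
           \<le> ennreal (real (card X) * measure lebesgue Z)"
proof -
  define v where "v \<mu> = indicator Z \<mu> *\<^sub>R \<eta> \<mu>" for \<mu>
  define w where "w t = (\<Sum>x\<in>X. v (a x + t))" for t
  have vm: "v \<in> borel_measurable lebesgue"
    using \<eta>m unfolding set_borel_measurable_def v_def .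
  have v_le: "cmod (v \<mu>) \<le> indicator Z \<mu>" for \<mu>
    using \<eta>b by (auto simp: v_def indicator_def)
  note translates = separated_translates_sum[where a = a, OF X Zs ZNM sep vm v_le]
  have wm: "w \<in> borel_measurable lebesgue" and wi: "integrable lebesgue w"
    and w_le_one: "\<And>t. cmod (w t) \<le> 1"
    and w_L1: "(\<integral>t. cmod (w t) \<partial>lebesgue) \<le> real (card X) * measure lebesgue Z"
    using translates(2-5) by (simp_all add: w_def[abs_def])
  have transform: "(\<Sum>x\<in>X. e (\<alpha> * a x)) * H \<eta> Z \<alpha> = (\<integral>t. w t * e (-\<alpha>*t) \<partial>lebesgue)" for \<alpha>
  proof -
    have H_eq: "H \<eta> Z \<alpha> = (\<integral>\<mu>. v \<mu> * e (-\<alpha>*\<mu>) \<partial>lebesgue)"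
      unfolding H_def set_lebesgue_integral_def v_def
      by (intro Bochner_Integration.integral_cong refl) (simp add: scaleR_conv_of_real)
    show ?thesis
      unfolding H_eq w_def by (rule exp_sum_times_fourier[OF vm translates(1)])
  qed
  have "(\<integral>\<^sup>+\<alpha>. ennreal ((cmod ((\<Sum>x\<in>X. e (\<alpha> * a x)) * H \<eta> Z \<alpha>))\<^sup>2) \<partial>lborel)
      \<le> ennreal (\<integral>t. cmod (w t) \<partial>lebesgue)"
    unfolding transform by (rule fourier_energy_le_L1_lebesgue[OF wm wi w_le_one])
  also have "\<dots> \<le> ennreal (real (card X) * measure lebesgue Z)"
    by (rule ennreal_leI[OF w_L1])
  finally show ?thesis .
qed

section \<open>Elementary estimates\<close>

lemma diff_powers_lower_bound:
  fixes b x y :: real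
  assumes b: "0 \<le> b" "b \<le> x" and xy: "x + 1 \<le> y"
  shows "real k * b ^ (k - 1) \<le> y ^ k - x ^ k"
proof -
  have term_bound: "b ^ (k - 1) \<le> x ^ (k - Suc i) * y ^ i" if "i < k" for i
  proof -
    have "b ^ (k - 1) = b ^ (k - Suc i) * b ^ i" using that by (simp flip: power_add)
    also have "\<dots> \<le> x ^ (k - Suc i) * y ^ i" using b xy by (intro mult_mono power_mono) auto
    finally show ?thesis .
  qed
  define s where "s = (\<Sum>i<k. x ^ (k - Suc i) * y ^ i)"
  have sum_bound: "real k * b ^ (k - 1) \<le> s"
    unfolding s_def using sum_mono[of "{..<k}" "\<lambda>_. b ^ (k - 1)", OF term_bound] by simp
  have "0 \<le> s" using b(1) by (intro order.trans[OF _ sum_bound]) simp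
  then have "s \<le> (y - x) * s" using mult_right_mono[of 1 "y - x" s] xy by simp
  also have "(y - x) * s = y ^ k - x ^ k"
    by (simp add: s_def power_diff_sumr2)
  finally show ?thesis using sum_bound by linarith
qed

lemma kth_power_frequencies_separated:
  fixes lam c P M :: real and x y :: int
  assumes k: "k \<ge> 1" and cP: "c * P > 0" and lam: "lam \<noteq> 0"
    and M: "M \<le> \<bar>lam\<bar> * (real k - 1) * (c * P) ^ (k - 1)"
    and x: "c * P < of_int x" and y: "c * P < of_int y" and xy: "x \<noteq> y"
  shows "M < \<bar>lam * of_int x ^ k - lam * of_int y ^ k\<bar>"
proof -
  have gap: "\<bar>lam\<bar> * (real k * (c * P) ^ (k - 1)) \<le> \<bar>lam * of_int u ^ k - lam * of_int v ^ k\<bar>"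
    if "c * P < of_int u" "u < v" for u v :: int
  proof -
    have "real k * (c * P) ^ (k - 1) \<le> of_int v ^ k - of_int u ^ k"
      using that cP by (intro diff_powers_lower_bound) auto
    also have "\<dots> \<le> \<bar>of_int u ^ k - of_int v ^ k\<bar>"
      using abs_ge_minus_self[of "of_int u ^ k - of_int v ^ k :: real"] by simp
    finally show ?thesis
      by (simp add: abs_mult mult_left_mono flip: right_diff_distrib)
  qed
  have "\<bar>lam\<bar> * (real k * (c * P) ^ (k - 1)) \<le> \<bar>lam * of_int x ^ k - lam * of_int y ^ k\<bar>"
  proof (cases "x < y")
    case True then show ?thesis using gap x by blast
  next
    case False
    then have "y < x" using xy by simp
    then show ?thesis using gap[OF y] by (simp add: abs_minus_commute)
  qed
  moreover have "\<bar>lam\<bar> * (real k - 1) * B < \<bar>lam\<bar> * (real k * B)" if "B > 0" for B :: real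
    using that lam by (simp add: algebra_simps)
  then have "\<bar>lam\<bar> * (real k - 1) * (c * P) ^ (k - 1) < \<bar>lam\<bar> * (real k * (c * P) ^ (k - 1))"
    using cP by simp
  ultimately show ?thesis using M by linarith
qed

lemma card_integers_in_interval:
  fixes A P :: real assumes A: "0 \<le> A" and P: "0 \<le> P"
  shows "finite {x::int. A < of_int x \<and> of_int x \<le> P}"
    and "real (card {x::int. A < of_int x \<and> of_int x \<le> P}) \<le> P"
proof -
  have sub: "{x::int. A < of_int x \<and> of_int x \<le> P} \<subseteq> {1..\<lfloor>P\<rfloor>}"
    using A by (auto simp: le_floor_iff)
  then show "finite {x::int. A < of_int x \<and> of_int x \<le> P}" by (rule finite_subset) simp
  then have "card {x::int. A < of_int x \<and> of_int x \<le> P} \<le> card {1..\<lfloor>P\<rfloor>}"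
    using sub by (intro card_mono) auto
  then have "real (card {x::int. A < of_int x \<and> of_int x \<le> P}) \<le> real (nat \<lfloor>P\<rfloor>)" by simp
  also have "\<dots> \<le> P" using P by simp
  finally show "real (card {x::int. A < of_int x \<and> of_int x \<le> P}) \<le> P" .
qed

lemma K1_bounds:
  assumes "\<delta> > 0" shows "0 \<le> K1 \<delta> \<alpha> \<and> K1 \<delta> \<alpha> \<le> 1"
proof (cases "\<alpha> = 0")
  case False
  define y where "y = pi * \<delta> * \<alpha>"
  have "y \<noteq> 0" using assms False by (simp add: y_def)
  then have "\<bar>sin y / y\<bar> \<le> 1" using abs_sin_x_le_abs_x[of y] by (simp add: divide_le_eq_1)
  then have "\<bar>sin y / y\<bar>\<^sup>2 \<le> 1" by (intro power_le_one) auto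
  then have "(sin y / y)\<^sup>2 \<le> 1" by (simp add: power_divide)
  then show ?thesis using False by (simp add: K1_def y_def)
qed (simp add: K1_def)

theorem lemma2p2:
  fixes k :: nat and c lam :: real
  assumes "k \<ge> 2" and "c > 0" and "lam \<noteq> 0"
  shows "\<exists>N0::real. \<forall>N \<ge> N0. \<forall>\<delta> M :: real. \<forall>Z :: real set. \<forall>\<eta> :: real \<Rightarrow> complex.
     0 < \<delta> \<longrightarrow> \<delta> \<le> 1 \<longrightarrow>
     M \<le> \<bar>lam\<bar> * (real k - 1) * (c * N powr (1 / real k)) ^ (k - 1) \<longrightarrow>
     Z \<in> sets lebesgue \<longrightarrow> Z \<subseteq> {N..N + M} \<longrightarrow>
     set_borel_measurable lebesgue Z \<eta> \<longrightarrow>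
     (\<forall>\<mu>\<in>Z. cmod (\<eta> \<mu>) = 1) \<longrightarrow>
     (\<integral>\<^sup>+ \<alpha>. ennreal ((cmod (fc k c (N powr (1 / real k)) (lam * \<alpha>) * H \<eta> Z \<alpha>))\<^sup>2 * K1 \<delta> \<alpha>) \<partial>lborel)
       \<le> ennreal (2 * N powr (1 / real k) * measure lebesgue Z)"
proof (intro exI[of _ 1] allI impI)
  fix N \<delta> M :: real and Z :: "real set" and \<eta> :: "real \<Rightarrow> complex"
  assume N: "N \<ge> 1" and \<delta>: "0 < \<delta>" "\<delta> \<le> 1"
    and M: "M \<le> \<bar>lam\<bar> * (real k - 1) * (c * N powr (1 / real k)) ^ (k - 1)"
    and Zs: "Z \<in> sets lebesgue" and ZNM: "Z \<subseteq> {N..N + M}"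
    and \<eta>m: "set_borel_measurable lebesgue Z \<eta>" and \<eta>1: "\<forall>\<mu>\<in>Z. cmod (\<eta> \<mu>) = 1"
  define P where "P = N powr (1 / real k)"
  define X where "X = {x::int. c * P < of_int x \<and> of_int x \<le> P}"
  define a where "a x = lam * of_int x ^ k" for x :: int
  have P: "P > 0" using N by (simp add: P_def)
  have X: "finite X" "real (card X) \<le> P"
    unfolding X_def using card_integers_in_interval[of "c * P" P] assms P by auto
  have sep: "M < \<bar>a x - a y\<bar>" if "x \<in> X" "y \<in> X" "x \<noteq> y" for x y
    using kth_power_frequencies_separated[of k c P lam M x y] assms P M that
    by (auto simp: X_def a_def P_def)
  have fc_eq: "fc k c P (lam * \<alpha>) = (\<Sum>x\<in>X. e (\<alpha> * a x))" for \<alpha>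
    unfolding fc_def X_def a_def by (simp add: mult_ac)
  have "(\<integral>\<^sup>+ \<alpha>. ennreal ((cmod (fc k c P (lam * \<alpha>) * H \<eta> Z \<alpha>))\<^sup>2 * K1 \<delta> \<alpha>) \<partial>lborel)
      \<le> (\<integral>\<^sup>+ \<alpha>. ennreal ((cmod ((\<Sum>x\<in>X. e (\<alpha> * a x)) * H \<eta> Z \<alpha>))\<^sup>2) \<partial>lborel)"
    unfolding fc_eq using K1_bounds[OF \<delta>(1)]
    by (intro nn_integral_mono ennreal_leI) (auto intro!: mult_left_le)
  also have "\<dots> \<le> ennreal (real (card X) * measure lebesgue Z)"
    using \<eta>1 by (intro separated_exp_sum_energy_bound[OF X(1) Zs ZNM sep \<eta>m]) auto
  also have "\<dots> \<le> ennreal (2 * P * measure lebesgue Z)"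
    using X(2) P by (intro ennreal_leI mult_right_mono) auto
  finally show "(\<integral>\<^sup>+ \<alpha>. ennreal ((cmod (fc k c (N powr (1 / real k)) (lam * \<alpha>) * H \<eta> Z \<alpha>))\<^sup>2 * K1 \<delta> \<alpha>) \<partial>lborel)
       \<le> ennreal (2 * N powr (1 / real k) * measure lebesgue Z)"
    unfolding P_def .
qed

end
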